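(* Consider a connectivity graph $G=(V,E)$ with source $s$, a set $R$ of $n$ relay nodes, and a terminal node $t$, and let $p'$ be the probability that two given nodes of $G$ are joined by an edge. Let $0\le k\le n$, let $(V_k,\overline{V}_k)$ be any partition of $R$ with $|V_k|=k$ and $|\overline V_k|=n-k$, and let $C_k$ be the capacity of the corresponding $s$-$t$-cut. Then for every $0<\epsilon<1$, $$\Pr\big[C_k\le (1-\epsilon)\,\mathbf{E}[C_k]\big]\;\le\;\exp\!\Big(-\Big(\frac{\epsilon^2 (n-k)\,p'}{2}-\ln(k+1)\Big)\Big).$$
   Context: Quasi random geometric graph: fix reals $0\le r<r'\le 1$ and $p\in[0,1]$. Nodes are placed independently and uniformly at random in $[0,1]^2$. For two nodes $u,v$ with Euclidean distance $d(u,v)$: $(u,v)\in E$ if $d(u,v)\le r$; $(u,v)\notin E$ if $d(u,v)>r'$; and $(u,v)\in E$ with probability $p$ if $r<d(u,v)\le r'$. The graph is undirected. Connectivity graph: $V=\{s\}\cup R\cup T$, where $s$ is a source node, $R$ is a set of $n$ relay nodes and $T$ is a set of terminal nodes, and the graph is a quasi random geometric graph on $V$, except that the source is never joined directly to a terminal (every message passes through at least one relay). The source only sends and the terminals only receive. Edge capacities are $C_{ij}=1$ if $(i,j)\in E$ and $C_{ij}=0$ otherwise, with $C_{ij}=C_{ji}$. The connection probability $p'$ is the probability that two given nodes are joined by an edge; it is the same for every pair of nodes that may be joined. Standing assumption: for each fixed vertex $i$, the indicators $\{C_{ij}\}_{j\neq i}$ are mutually independent Bernoulli($p'$) random variables.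 $s$-$t$-cut of size $k$: for a terminal $t\in T$, a partition $R=V_k\cup\overline V_k$ with $V_k\cap\overline V_k=\emptyset$, $|V_k|=k$ and $|\overline V_k|=n-k$. The sets $\{s\}\cup V_k$ and $\overline V_k\cup\{t\}$ are the two sides of the cut. Its capacity is $$C_k=\sum_{i\in\overline V_k}C_{si}+\sum_{j\in V_k}\sum_{i\in\overline V_k}C_{ji}+\sum_{j\in V_k}C_{jt}.$$ *)

theory Defs
  imports "HOL-Probability.Probability"
begin

definition conn_vertices :: "'v \<Rightarrow> 'v set \<Rightarrow> 'v set \<Rightarrow> 'v set" where
  "conn_vertices s R T = insert s (R \<union> T)"

text \<open>Capacity of the s-t-cut with sides {s} + Vk and Vkbar + {t}; C i j is the
  (random) 0/1 edge capacity between i and j.\<close>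
definition cut_capacity ::
  "('v \<Rightarrow> 'v \<Rightarrow> 'w \<Rightarrow> real) \<Rightarrow> 'v \<Rightarrow> 'v \<Rightarrow> 'v set \<Rightarrow> 'v set \<Rightarrow> 'w \<Rightarrow> real" where
  "cut_capacity C s t Vk Vkbar \<omega> =
     (\<Sum>i\<in>Vkbar. C s i \<omega>) + (\<Sum>j\<in>Vk. \<Sum>i\<in>Vkbar. C j i \<omega>) + (\<Sum>j\<in>Vk. C j t \<omega>)"

end

theory Submission
  imports Defs
begin

text \<open>Split the cut at the source side: every vertex g of {s} \<union> Vk contributes the
  edges from g to the opposite side, which are independent Bernoulli(p') variables, at least
  n - k of them. A multiplicative Chernoff bound makes each of these k + 1 sums fall below
  (1 - \<epsilon>) times its mean with probability at most exp(-\<epsilon>^2 (n - k) p' / 2); if the whole cut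
  falls below (1 - \<epsilon>) times its mean, one of the sums does, so a union bound costs the
  factor k + 1.\<close>

lemma exp_minus_le_quadratic:
  fixes x :: real
  assumes "0 \<le> x"
  shows "exp (- x) \<le> 1 - x + x\<^sup>2 / 2"
proof -
  let ?g = "\<lambda>x::real. 1 - x + x\<^sup>2 / 2 - exp (- x)"
  have "?g 0 \<le> ?g x"
  proof (rule DERIV_nonneg_imp_nondecreasing[OF assms])
    fix y :: real
    have "DERIV ?g y :> - 1 + y + exp (- y)"
      by (auto intro!: derivative_eq_intros simp: power2_eq_square)
    moreover have "0 \<le> - 1 + y + exp (- y)"
      using exp_ge_add_one_self[of "- y"] by linarith
    ultimately show "\<exists>d. DERIV ?g y :> d \<and> d \<ge> 0" by blast
  qed
  then show ?thesis by simp
qed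

context prob_space
begin

lemma
  assumes "random_variable borel X" and "\<And>\<omega>. \<omega> \<in> space M \<Longrightarrow> X \<omega> \<in> {0, 1}"
  shows integrable_zero_one: "integrable M X"
    and expectation_zero_one: "expectation X = prob {\<omega> \<in> space M. X \<omega> = 1}"
proof -
  show "integrable M X"
    by (rule integrable_const_bound[where B = 1]) (use assms in force)+
  have "expectation X = expectation (indicator {\<omega> \<in> space M. X \<omega> = 1})"
    by (intro Bochner_Integration.integral_cong) (auto dest: assms(2) simp: indicator_def)
  then show "expectation X = prob {\<omega> \<in> space M. X \<omega> = 1}"
    by (simp add: Int_absorb2)
qed

lemma expectation_sum_zero_one:
  fixes X :: "'i \<Rightarrow> 'a \<Rightarrow> real" and p :: real
  assumes "\<And>i. i \<in> I \<Longrightarrow> random_variable borel (X i)"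
    and "\<And>i \<omega>. i \<in> I \<Longrightarrow> \<omega> \<in> space M \<Longrightarrow> X i \<omega> \<in> {0, 1}"
    and "\<And>i. i \<in> I \<Longrightarrow> prob {\<omega> \<in> space M. X i \<omega> = 1} = p"
  shows "expectation (\<lambda>\<omega>. \<Sum>i\<in>I. X i \<omega>) = card I * p"
proof -
  have "expectation (\<lambda>\<omega>. \<Sum>i\<in>I. X i \<omega>) = (\<Sum>i\<in>I. expectation (X i))"
    using assms(1,2) integrable_zero_one by (intro Bochner_Integration.integral_sum) blast
  also have "\<dots> = (\<Sum>i\<in>I. p)"
    using assms expectation_zero_one by (intro sum.cong) auto
  finally show ?thesis
    by simp
qed

lemma nn_integral_exp_zero_one_le:
  fixes l :: real
  assumes "random_variable borel X" and "\<And>\<omega>. \<omega> \<in> space M \<Longrightarrow> X \<omega> \<in> {0, 1}"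
    and "0 \<le> l"
  shows "(\<integral>\<^sup>+\<omega>. exp (- l * X \<omega>) \<partial>M) \<le> exp (- (1 - exp (- l)) * prob {\<omega> \<in> space M. X \<omega> = 1})"
proof -
  define c where "c = 1 - exp (- l)"
  have c: "0 \<le> c" "c \<le> 1"
    using assms(3) by (auto simp: c_def)
  note X = integrable_zero_one[OF assms(1,2)] expectation_zero_one[OF assms(1,2)]
  have cX: "c * X \<omega> \<le> 1" if "\<omega> \<in> space M" for \<omega>
    using assms(2)[OF that] c by force
  \<comment> \<open>On {0, 1} the convex function exp(-l x) coincides with its chord 1 - c x.\<close>
  have "(\<integral>\<^sup>+\<omega>. exp (- l * X \<omega>) \<partial>M) = (\<integral>\<^sup>+\<omega>. ennreal (1 - c * X \<omega>) \<partial>M)"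
    using assms(2) by (intro nn_integral_cong) (force simp: c_def)
  also have "\<dots> = ennreal (expectation (\<lambda>\<omega>. 1 - c * X \<omega>))"
    using assms(1,2) cX X(1) by (intro nn_integral_eq_integral) auto
  also have "expectation (\<lambda>\<omega>. 1 - c * X \<omega>) = 1 - c * prob {\<omega> \<in> space M. X \<omega> = 1}"
    using X by (simp add: prob_space)
  also have "\<dots> \<le> exp (- c * prob {\<omega> \<in> space M. X \<omega> = 1})"
    using exp_ge_add_one_self[of "- c * prob {\<omega> \<in> space M. X \<omega> = 1}"] by simp
  finally show ?thesis
    by (simp add: c_def ennreal_leI)
qed

theorem chernoff_lower_tail_zero_one:
  fixes X :: "'i \<Rightarrow> 'a \<Rightarrow> real" and p \<epsilon> :: real
  assumes fin: "finite I" and ind: "indep_vars (\<lambda>_. borel) X I"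
    and zero_one: "\<And>i \<omega>. i \<in> I \<Longrightarrow> \<omega> \<in> space M \<Longrightarrow> X i \<omega> \<in> {0, 1}"
    and prob_one: "\<And>i. i \<in> I \<Longrightarrow> prob {\<omega> \<in> space M. X i \<omega> = 1} = p"
    and p: "0 \<le> p" and \<epsilon>: "0 < \<epsilon>" "\<epsilon> < 1"
  shows "prob {\<omega> \<in> space M. (\<Sum>i\<in>I. X i \<omega>) \<le> (1 - \<epsilon>) * (card I * p)}
           \<le> exp (- (\<epsilon>\<^sup>2 * card I * p / 2))"
proof -
  have rv[measurable]: "\<And>i. i \<in> I \<Longrightarrow> random_variable borel (X i)"
    using ind by (auto simp: indep_vars_def)
  define a where "a = (1 - \<epsilon>) * (card I * p)"
  define c where "c = 1 - exp (- \<epsilon>)"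
  have "ennreal (prob {\<omega> \<in> space M. (\<Sum>i\<in>I. X i \<omega>) \<le> a})
      \<le> exp (\<epsilon> * a) * (\<integral>\<^sup>+\<omega>\<in>space M. exp (- \<epsilon> * (\<Sum>i\<in>I. X i \<omega>)) \<partial>M)"
    unfolding emeasure_eq_measure[symmetric]
    by (rule Chernoff_ineq_nn_integral_le) (use \<epsilon> in auto)
  also have "(\<integral>\<^sup>+\<omega>\<in>space M. exp (- \<epsilon> * (\<Sum>i\<in>I. X i \<omega>)) \<partial>M)
      = (\<integral>\<^sup>+\<omega>. (\<Prod>i\<in>I. ennreal (exp (- \<epsilon> * X i \<omega>))) \<partial>M)"
    by (intro nn_integral_cong) (simp add: sum_distrib_left exp_sum fin prod_ennreal)
  also have "\<dots> = (\<Prod>i\<in>I. \<integral>\<^sup>+\<omega>. exp (- \<epsilon> * X i \<omega>) \<partial>M)"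
    by (intro indep_vars_nn_integral fin indep_vars_compose2[OF ind]) auto
  also have "\<dots> \<le> (\<Prod>i\<in>I. ennreal (exp (- c * p)))"
  proof (rule prod_mono_ennreal)
    fix i assume "i \<in> I"
    then show "(\<integral>\<^sup>+\<omega>. exp (- \<epsilon> * X i \<omega>) \<partial>M) \<le> exp (- c * p)"
      using nn_integral_exp_zero_one_le[of "X i" \<epsilon>] rv zero_one prob_one \<epsilon> by (simp add: c_def)
  qed
  also have "\<dots> = exp (- (card I * c * p))"
    by (simp add: ennreal_power exp_of_nat_mult[symmetric])
  finally have "ennreal (prob {\<omega> \<in> space M. (\<Sum>i\<in>I. X i \<omega>) \<le> a})
      \<le> ennreal (exp (\<epsilon> * a)) * ennreal (exp (- (card I * c * p)))"
    by (simp add: mult_left_mono)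
  then have tail: "prob {\<omega> \<in> space M. (\<Sum>i\<in>I. X i \<omega>) \<le> a} \<le> exp (\<epsilon> * a - card I * c * p)"
    by (simp add: ennreal_mult'[symmetric] mult_exp_exp)
  have "\<epsilon> * a - card I * c * p = card I * p * (\<epsilon> * (1 - \<epsilon>) - c)"
    by (simp add: a_def algebra_simps)
  also have "\<dots> \<le> card I * p * (- \<epsilon>\<^sup>2 / 2)"
    using exp_minus_le_quadratic[of \<epsilon>] \<epsilon> p
    by (intro mult_left_mono) (auto simp: c_def power2_eq_square algebra_simps)
  finally have "exp (\<epsilon> * a - card I * c * p) \<le> exp (- (\<epsilon>\<^sup>2 * card I * p / 2))"
    by (simp add: mult_ac)
  from order_trans[OF tail this] show ?thesis
    unfolding a_def .
qed

lemma prob_sum_le_sum_le: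
  fixes S :: "'g \<Rightarrow> 'a \<Rightarrow> real" and a :: "'g \<Rightarrow> real"
  assumes "finite J" and "J \<noteq> {}" and "\<And>g. g \<in> J \<Longrightarrow> random_variable borel (S g)"
  shows "prob {\<omega> \<in> space M. (\<Sum>g\<in>J. S g \<omega>) \<le> (\<Sum>g\<in>J. a g)}
           \<le> (\<Sum>g\<in>J. prob {\<omega> \<in> space M. S g \<omega> \<le> a g})"
proof -
  have "\<exists>g\<in>J. S g \<omega> \<le> a g" if "(\<Sum>g\<in>J. S g \<omega>) \<le> (\<Sum>g\<in>J. a g)" for \<omega>
  proof (rule ccontr)
    assume "\<not> (\<exists>g\<in>J. S g \<omega> \<le> a g)"
    then have "(\<Sum>g\<in>J. a g) < (\<Sum>g\<in>J. S g \<omega>)"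
      using assms(1,2) by (intro sum_strict_mono) auto
    with that show False by simp
  qed
  then have "{\<omega> \<in> space M. (\<Sum>g\<in>J. S g \<omega>) \<le> (\<Sum>g\<in>J. a g)}
      \<subseteq> (\<Union>g\<in>J. {\<omega> \<in> space M. S g \<omega> \<le> a g})"
    by blast
  moreover have events: "{\<omega> \<in> space M. S g \<omega> \<le> a g} \<in> events" if "g \<in> J" for g
    using assms(3)[OF that] by measurable
  ultimately have "prob {\<omega> \<in> space M. (\<Sum>g\<in>J. S g \<omega>) \<le> (\<Sum>g\<in>J. a g)}
      \<le> prob (\<Union>g\<in>J. {\<omega> \<in> space M. S g \<omega> \<le> a g})"
    using assms(1) by (intro finite_measure_mono sets.finite_UN) auto
  also have "\<dots> \<le> (\<Sum>g\<in>J. prob {\<omega> \<in> space M. S g \<omega> \<le> a g})"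
    using assms(1) events by (rule measure_UNION_le)
  finally show ?thesis .
qed

theorem chernoff_lower_tail_sum_of_sums:
  fixes X :: "'g \<Rightarrow> 'i \<Rightarrow> 'a \<Rightarrow> real" and p \<epsilon> :: real and m :: nat
  assumes J: "finite J" "J \<noteq> {}" and I: "\<And>g. g \<in> J \<Longrightarrow> finite (I g)"
    and ind: "\<And>g. g \<in> J \<Longrightarrow> indep_vars (\<lambda>_. borel) (X g) (I g)"
    and zero_one: "\<And>g i \<omega>. g \<in> J \<Longrightarrow> i \<in> I g \<Longrightarrow> \<omega> \<in> space M \<Longrightarrow> X g i \<omega> \<in> {0, 1}"
    and prob_one: "\<And>g i. g \<in> J \<Longrightarrow> i \<in> I g \<Longrightarrow> prob {\<omega> \<in> space M. X g i \<omega> = 1} = p"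
    and card_ge: "\<And>g. g \<in> J \<Longrightarrow> m \<le> card (I g)"
    and p: "0 \<le> p" and \<epsilon>: "0 < \<epsilon>" "\<epsilon> < 1"
  shows "prob {\<omega> \<in> space M. (\<Sum>g\<in>J. \<Sum>i\<in>I g. X g i \<omega>)
             \<le> (1 - \<epsilon>) * expectation (\<lambda>\<omega>. \<Sum>g\<in>J. \<Sum>i\<in>I g. X g i \<omega>)}
           \<le> card J * exp (- (\<epsilon>\<^sup>2 * m * p / 2))"
proof -
  have rv[measurable]: "random_variable borel (X g i)" if "g \<in> J" "i \<in> I g" for g i
    using ind[OF that(1)] that(2) by (auto simp: indep_vars_def)
  have "expectation (\<lambda>\<omega>. \<Sum>g\<in>J. \<Sum>i\<in>I g. X g i \<omega>) = (\<Sum>g\<in>J. expectation (\<lambda>\<omega>. \<Sum>i\<in>I g. X g i \<omega>))"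
    using rv zero_one integrable_zero_one by (intro Bochner_Integration.integral_sum) blast
  also have "\<dots> = (\<Sum>g\<in>J. card (I g) * p)"
    using rv zero_one prob_one by (intro sum.cong expectation_sum_zero_one) auto
  finally have "(1 - \<epsilon>) * expectation (\<lambda>\<omega>. \<Sum>g\<in>J. \<Sum>i\<in>I g. X g i \<omega>)
      = (\<Sum>g\<in>J. (1 - \<epsilon>) * (card (I g) * p))"
    by (simp add: sum_distrib_left)
  then have "prob {\<omega> \<in> space M. (\<Sum>g\<in>J. \<Sum>i\<in>I g. X g i \<omega>)
             \<le> (1 - \<epsilon>) * expectation (\<lambda>\<omega>. \<Sum>g\<in>J. \<Sum>i\<in>I g. X g i \<omega>)}
      \<le> (\<Sum>g\<in>J. prob {\<omega> \<in> space M. (\<Sum>i\<in>I g. X g i \<omega>) \<le> (1 - \<epsilon>) * (card (I g) * p)})"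
    using J rv by (simp only:) (intro prob_sum_le_sum_le borel_measurable_sum)
  also have "\<dots> \<le> (\<Sum>g\<in>J. exp (- (\<epsilon>\<^sup>2 * m * p / 2)))"
  proof (rule sum_mono)
    fix g assume g: "g \<in> J"
    have "prob {\<omega> \<in> space M. (\<Sum>i\<in>I g. X g i \<omega>) \<le> (1 - \<epsilon>) * (card (I g) * p)}
        \<le> exp (- (\<epsilon>\<^sup>2 * card (I g) * p / 2))"
      using I ind zero_one prob_one g p \<epsilon> by (intro chernoff_lower_tail_zero_one) auto
    also have "\<dots> \<le> exp (- (\<epsilon>\<^sup>2 * m * p / 2))"
      using card_ge[OF g] p by (auto intro!: mult_right_mono mult_left_mono divide_right_mono)
    finally show "prob {\<omega> \<in> space M. (\<Sum>i\<in>I g. X g i \<omega>) \<le> (1 - \<epsilon>) * (card (I g) * p)}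
        \<le> exp (- (\<epsilon>\<^sup>2 * m * p / 2))" .
  qed
  finally show ?thesis
    by simp
qed

end

text \<open>The source is never joined to a terminal, so its far side consists of relays only.\<close>
definition cut_far_side :: "'v \<Rightarrow> 'v \<Rightarrow> 'v set \<Rightarrow> 'v \<Rightarrow> 'v set" where
  "cut_far_side s t Vkbar g = (if g = s then Vkbar else insert t Vkbar)"

lemma cut_capacity_eq_sum_far_side:
  assumes "finite Vk" "finite Vkbar" "s \<notin> Vk" "t \<notin> Vkbar"
  shows "cut_capacity C s t Vk Vkbar = (\<lambda>\<omega>. \<Sum>g\<in>insert s Vk. \<Sum>i\<in>cut_far_side s t Vkbar g. C g i \<omega>)"
proof
  fix \<omega>
  have "(\<Sum>g\<in>Vk. \<Sum>i\<in>cut_far_side s t Vkbar g. C g i \<omega>) = (\<Sum>g\<in>Vk. C g t \<omega> + (\<Sum>i\<in>Vkbar. C g i \<omega>))"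
    using assms by (intro sum.cong) (auto simp: cut_far_side_def)
  then show "cut_capacity C s t Vk Vkbar \<omega> = (\<Sum>g\<in>insert s Vk. \<Sum>i\<in>cut_far_side s t Vkbar g. C g i \<omega>)"
    using assms by (simp add: cut_capacity_def cut_far_side_def sum.distrib)
qed

lemma card_cut_far_side_ge:
  assumes "finite Vkbar" "t \<notin> Vkbar"
  shows "card Vkbar \<le> card (cut_far_side s t Vkbar g)"
  using assms by (simp add: cut_far_side_def)

lemma cut_far_side_subset_conn_vertices:
  assumes "Vk \<union> Vkbar = R" "Vk \<inter> Vkbar = {}" "s \<notin> R" "t \<in> T" "R \<inter> T = {}"
    and "g \<in> insert s Vk"
  shows "g \<in> conn_vertices s R T" "cut_far_side s t Vkbar g \<subseteq> conn_vertices s R T - {g}"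
  using assms by (auto simp: conn_vertices_def cut_far_side_def)

lemma cut_far_side_not_source_terminal:
  assumes "Vk \<union> Vkbar = R" "s \<notin> R" "s \<notin> T" "t \<in> T" "R \<inter> T = {}"
    and "i \<in> cut_far_side s t Vkbar g"
  shows "\<not> (g = s \<and> i \<in> T)" "\<not> (i = s \<and> g \<in> T)"
  using assms by (auto simp: cut_far_side_def split: if_splits)

theorem theorem8:
  fixes M :: "'w measure" and C :: "'v \<Rightarrow> 'v \<Rightarrow> 'w \<Rightarrow> real"
    and s t :: 'v and R T Vk Vkbar :: "'v set" and n k :: nat and p' \<epsilon> :: real
  assumes M: "prob_space M"
    and finR: "finite R" and cardR: "card R = n"
    and finT: "finite T" and tT: "t \<in> T"
    and sR: "s \<notin> R" and sT: "s \<notin> T" and RT: "R \<inter> T = {}"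
    and p'_nonneg: "0 \<le> p'" and p'_le1: "p' \<le> 1"
    and rv: "\<And>i j. i \<in> conn_vertices s R T \<Longrightarrow> j \<in> conn_vertices s R T \<Longrightarrow>
               C i j \<in> borel_measurable M"
    and sym: "\<And>i j. C i j = C j i"
    and zero_one: "\<And>i j \<omega>. \<omega> \<in> space M \<Longrightarrow> C i j \<omega> \<in> {0, 1}"
    and no_s_T: "\<And>x \<omega>. x \<in> T \<Longrightarrow> C s x \<omega> = 0"
    and bern: "\<And>i j. i \<in> conn_vertices s R T \<Longrightarrow> j \<in> conn_vertices s R T \<Longrightarrow> i \<noteq> j \<Longrightarrow>
               \<not> (i = s \<and> j \<in> T) \<Longrightarrow> \<not> (j = s \<and> i \<in> T) \<Longrightarrow>
               prob_space.prob M {\<omega> \<in> space M. C i j \<omega> = 1} = p'"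
    and indep: "\<And>i. i \<in> conn_vertices s R T \<Longrightarrow>
               prob_space.indep_vars M (\<lambda>_. borel) (C i) (conn_vertices s R T - {i})"
    and kn: "k \<le> n"
    and part: "Vk \<union> Vkbar = R" "Vk \<inter> Vkbar = {}"
    and cardVk: "card Vk = k" and cardVkbar: "card Vkbar = n - k"
    and eps: "0 < \<epsilon>" "\<epsilon> < 1"
  shows "prob_space.prob M
           {\<omega> \<in> space M. cut_capacity C s t Vk Vkbar \<omega>
              \<le> (1 - \<epsilon>) * prob_space.expectation M (cut_capacity C s t Vk Vkbar)}
         \<le> exp (- (\<epsilon>\<^sup>2 * real (n - k) * p' / 2 - ln (real k + 1)))"
proof -
  interpret prob_space M by (rule M)
  have fin: "finite Vk" "finite Vkbar"
    using part(1) finR by auto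
  have sVk: "s \<notin> Vk" and tVkbar: "t \<notin> Vkbar"
    using part(1) sR tT RT by auto
  note far_side = cut_far_side_subset_conn_vertices[OF part sR tT RT]
  have "prob {\<omega> \<in> space M. cut_capacity C s t Vk Vkbar \<omega>
              \<le> (1 - \<epsilon>) * expectation (cut_capacity C s t Vk Vkbar)}
        \<le> card (insert s Vk) * exp (- (\<epsilon>\<^sup>2 * real (n - k) * p' / 2))"
    unfolding cut_capacity_eq_sum_far_side[OF fin sVk tVkbar]
  proof (rule chernoff_lower_tail_sum_of_sums)
    fix g i assume g: "g \<in> insert s Vk"
    show "indep_vars (\<lambda>_. borel) (C g) (cut_far_side s t Vkbar g)"
      using indep_vars_subset[OF indep[OF far_side(1)[OF g]] far_side(2)[OF g]] .
    show "n - k \<le> card (cut_far_side s t Vkbar g)"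
      using card_cut_far_side_ge[OF fin(2) tVkbar] cardVkbar by simp
    assume "i \<in> cut_far_side s t Vkbar g"
    then show "prob {\<omega> \<in> space M. C g i \<omega> = 1} = p'"
      using far_side[OF g] cut_far_side_not_source_terminal[OF part(1) sR sT tT RT]
      by (intro bern) auto
  qed (use fin zero_one p'_nonneg eps in \<open>auto simp: cut_far_side_def\<close>)
  also have "\<dots> = exp (ln (real k + 1)) * exp (- (\<epsilon>\<^sup>2 * real (n - k) * p' / 2))"
    using fin sVk cardVk by simp
  also have "\<dots> = exp (- (\<epsilon>\<^sup>2 * real (n - k) * p' / 2 - ln (real k + 1)))"
    unfolding mult_exp_exp by simp
  finally show ?thesis .
qed

end
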